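(* In the setting described in the context, for all meta-contexts $\Delta$, LF contexts $\Psi,\Phi$, computation contexts $\Gamma,\Gamma'$: (a) If $\Delta;\Psi\xRightarrow{u}A$ then $\Delta;\Psi\Longrightarrow A$. (b) If $\Delta;\Psi\xRightarrow{u}\sigma{:}\Phi$ then $\Delta;\Psi\Longrightarrow\sigma{:}\Phi$. (c) If $\Delta;\Psi > x{:}A \rightrightarrows P$ then $\Delta;\Psi,x{:}A\Longrightarrow P$. (d) If $\Delta > X{:}U;\Psi\rightrightarrows P$ then $\Delta,X{:}U;\Psi\Longrightarrow P$. (e) If $\Delta;\Gamma\xRightarrow{R}\tau$ then $\Delta;\Gamma\Longrightarrow\tau$. (f) If $\Delta;\Gamma\gg\Gamma'\xRightarrow{L}[\Psi\vdash P]$ then $\Delta;\Gamma,\Gamma'\Longrightarrow[\Psi\vdash P]$. (g) If $\Delta;\Gamma > y{:}\tau\Rightarrow[\Psi\vdash P]$ then $\Delta;\Gamma,y{:}\tau\Longrightarrow[\Psi\vdash P]$.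
   Context: Setting: the core of the two-level logic of the proof assistant Beluga. A global signature $\Sigma$ of constant declarations $\mathbf{c}{:}A$ is fixed. Syntax: atomic LF types $P,Q ::= \mathbf{a}\,M_1\dots M_n$; LF types $A,B ::= P \mid \Pi x{:}A.\,B$, written $A\rightarrow B$ when $x$ does not occur in $B$ and $\Pi\hat{x}{:}A.\,B$ when it does. Neutral terms $R ::= x \mid \mathbf{c} \mid R\,N \mid u[\sigma]$; normal terms $M,N ::= R \mid \lambda x.\,M$; substitutions $\sigma ::= \cdot \mid \mathsf{wk}_\psi \mid \sigma, M$. LF contexts $\Psi,\Phi ::= \cdot \mid \Psi, x{:}A \mid \Psi,\hat{x}{:}A \mid \psi$ ($x{:}A$ proof-relevant assumption, $\hat{x}{:}A$ parameter, $\psi$ context variable). Meta-terms $C ::= (\hat\Psi\vdash R) \mid \Psi$; meta-types $U ::= (\Psi\vdash P) \mid G$ ($G$ a context schema); meta-contexts $\Delta ::= \cdot \mid \Delta, X{:}U$. Computation types $\tau ::= [\Psi\vdash P] \mid \tau_1\rightarrow\tau_2 \mid \Pi^{\Box}X{:}U.\,\tau$ (types $[\Psi\vdash P]$ are called box types); computation contexts $\Gamma ::= \cdot \mid \Gamma, y{:}\tau$ (order immaterial). $[\sigma]B$: hereditary application of a simultaneous substitution; $[M/\hat{x}]B$: hereditary substitution; $[\![C/X]\!]\tau$: meta-substitution. $\Delta;\Psi\vdash M\Leftarrow A$: standard checking judgment for canonical contextual LF; $\Delta\Vdash C\Leftarrow U$: checking judgment for meta-terms. Sequent calculus for contextual LF,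 $\Delta;\Psi\Longrightarrow A$: (init$^\Sigma$) $\Delta;\Psi\Longrightarrow A$ if $\mathbf{c}{:}A\in\Sigma$; (init$^\Psi$) $\Delta;\Psi,x{:}A\Longrightarrow A$ for proof-relevant $x$; ($\Pi R$) from $\Delta;\Psi,\hat{x}{:}A\Longrightarrow B$ infer $\Delta;\Psi\Longrightarrow\Pi\hat{x}{:}A.\,B$; ($\Pi L$) if $x_1{:}\Pi\hat{x}{:}A.\,B\in\Psi$, $\Delta;\Psi\vdash M\Leftarrow A$, $\Delta;\Psi,x_2{:}[M/\hat{x}]B\Longrightarrow A'$ then $\Delta;\Psi\Longrightarrow A'$; ($\rightarrow R$) from $\Delta;\Psi,x{:}A\Longrightarrow B$ infer $\Delta;\Psi\Longrightarrow A\rightarrow B$; ($\rightarrow L$) if $x_1{:}A\rightarrow B\in\Psi$, $\Delta;\Psi\Longrightarrow A$, $\Delta;\Psi,x_2{:}B\Longrightarrow A'$ then $\Delta;\Psi\Longrightarrow A'$; (reflect) if $u{:}(\Phi\vdash P)\in\Delta$, $\Delta;\Psi\Longrightarrow\sigma{:}\Phi$, $\Delta;\Psi,x{:}[\sigma]P\Longrightarrow A$ then $\Delta;\Psi\Longrightarrow A$. Substitutions $\Delta;\Psi\Longrightarrow\sigma{:}\Phi$: $\Delta;\Psi\Longrightarrow\cdot{:}\cdot$; $\Delta;\psi,\Psi\Longrightarrow\mathsf{wk}_\psi{:}\psi$; from $\Delta;\Psi\Longrightarrow\sigma{:}\Phi$ and $\Delta;\Psi\Longrightarrow N{:}[\sigma]B$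 infer $(\sigma,N){:}(\Phi,x{:}B)$; from $\Delta;\Psi\Longrightarrow\sigma{:}\Phi$ and $\Delta;\Psi\vdash M\Leftarrow[\sigma]B$ infer $(\sigma,M){:}(\Phi,\hat{x}{:}B)$. Sequent calculus for computations, $\Delta;\Gamma\Longrightarrow\tau$: ($\Pi^\Box R$) from $\Delta,X{:}U;\Gamma\Longrightarrow\tau$ infer $\Delta;\Gamma\Longrightarrow\Pi^\Box X{:}U.\,\tau$; ($\Pi^\Box L$) if $y_1{:}\Pi^\Box X{:}U.\,\tau'\in\Gamma$, $\Delta\Vdash C\Leftarrow U$, $\Delta;\Gamma,y_2{:}[\![C/X]\!]\tau'\Longrightarrow\tau$ then $\Delta;\Gamma\Longrightarrow\tau$; ($\rightarrow L$) if $y_1{:}\tau_1\rightarrow\tau_2\in\Gamma$, $\Delta;\Gamma\Longrightarrow\tau_1$, $\Delta;\Gamma,y_2{:}\tau_2\Longrightarrow\tau$ then $\Delta;\Gamma\Longrightarrow\tau$; ($\rightarrow R$) from $\Delta;\Gamma,y{:}\tau_1\Longrightarrow\tau_2$ infer $\Delta;\Gamma\Longrightarrow\tau_1\rightarrow\tau_2$; (init) $\Delta;\Gamma,y{:}\tau\Longrightarrow\tau$; ($\Box R$) from $\Delta;\Psi\Longrightarrow P$ infer $\Delta;\Gamma\Longrightarrow[\Psi\vdash P]$; ($\Box L$) if $y{:}[\Psi\vdash P]\in\Gamma$ and $\Delta,X{:}(\Psi\vdash P);\Gamma\Longrightarrow\tau$ then $\Delta;\Gamma\Longrightarrow\tau$.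 Focusing calculus for LF. Uniform judgment $\Delta;\Psi\xRightarrow{u}A$: ($\Pi R$) from $\Delta;\Psi,\hat{x}{:}A\xRightarrow{u}B$ infer $\Delta;\Psi\xRightarrow{u}\Pi\hat{x}{:}A.\,B$; ($\rightarrow R$) from $\Delta;\Psi,x{:}A\xRightarrow{u}B$ infer $\Delta;\Psi\xRightarrow{u}A\rightarrow B$; (transition$^\Delta$) if $X{:}(\Phi\vdash Q)\in\Delta$, $\Delta;\Psi\xRightarrow{u}\sigma{:}\Phi$ and $[\sigma]Q=P$ then $\Delta;\Psi\xRightarrow{u}P$; (transition$^\Psi$) if $x{:}A\in\Psi$ and $\Delta;\Psi>x{:}A\rightrightarrows P$ then $\Delta;\Psi\xRightarrow{u}P$. Uniform substitutions $\Delta;\Psi\xRightarrow{u}\sigma{:}\Phi$: same four rules as the sequent substitution judgment with $\Longrightarrow$ replaced by $\xRightarrow{u}$ (the $\hat{x}$ case still uses $\Delta;\Psi\vdash M\Leftarrow[\sigma]B$). Focused judgment $\Delta;\Psi>x{:}A\rightrightarrows P$: (init$^\Psi$) $\Delta;\Psi>x{:}P\rightrightarrows P$; ($\rightarrow L$) from $\Delta;\Psi\xRightarrow{u}A$ and $\Delta;\Psi>x'{:}B\rightrightarrows P$ infer $\Delta;\Psi>x{:}A\rightarrow B\rightrightarrows P$; ($\Pi L$) from $\Delta;\Psi\vdash M\Leftarrow A$ and $\Delta;\Psi>x'{:}[M/\hat{x}]B\rightrightarrows P$ infer $\Delta;\Psi>x{:}\Pi\hat{x}{:}A.\,B\rightrightarrows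 P$. Focus on a meta-assumption: $\Delta>X{:}U;\Psi\rightrightarrows P$ holds iff $U=(\Phi\vdash Q)$ and there is $\sigma$ with $\Delta,X{:}U;\Psi\xRightarrow{u}\sigma{:}\Phi$ and $[\sigma]Q=P$. Focusing calculus for computations. Uniform right $\Delta;\Gamma\xRightarrow{R}\tau$: ($\rightarrow R$) from $\Delta;\Gamma,y{:}\tau_1\xRightarrow{R}\tau_2$ infer $\Delta;\Gamma\xRightarrow{R}\tau_1\rightarrow\tau_2$; ($\Pi^\Box R$) from $\Delta,X{:}U;\Gamma\xRightarrow{R}\tau$ infer $\Delta;\Gamma\xRightarrow{R}\Pi^\Box X{:}U.\,\tau$; (left to right) from $\Delta;\cdot\gg\Gamma\xRightarrow{L}[\Psi\vdash P]$ infer $\Delta;\Gamma\xRightarrow{R}[\Psi\vdash P]$. Uniform left $\Delta;\Gamma\gg\Gamma'\xRightarrow{L}[\Psi\vdash P]$: ($\Box L$) from $\Delta,X{:}(\Phi\vdash Q);\Gamma\gg\Gamma'\xRightarrow{L}[\Psi\vdash P]$ infer $\Delta;\Gamma\gg\Gamma',y{:}[\Phi\vdash Q]\xRightarrow{L}[\Psi\vdash P]$; (shift) if $\tau$ is not a box type and $\Delta;\Gamma,y{:}\tau\gg\Gamma'\xRightarrow{L}[\Psi\vdash P]$ then $\Delta;\Gamma\gg\Gamma',y{:}\tau\xRightarrow{L}[\Psi\vdash P]$; (level) from $\Delta;\Psi\xRightarrow{u}P$ infer $\Delta;\Gamma\gg\cdot\xRightarrow{L}[\Psi\vdash P]$;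 (focus) if $y{:}\tau\in\Gamma$ and $\Delta;\Gamma>y{:}\tau\Rightarrow[\Psi\vdash P]$ then $\Delta;\Gamma\gg\cdot\xRightarrow{L}[\Psi\vdash P]$. Focused $\Delta;\Gamma>y{:}\tau\Rightarrow[\Psi\vdash P]$: ($\Pi^\Box L$) from $\Delta\Vdash C\Leftarrow U$ and $\Delta;\Gamma>y'{:}[\![C/X]\!]\tau\Rightarrow[\Psi\vdash P]$ infer $\Delta;\Gamma>y{:}\Pi^\Box X{:}U.\,\tau\Rightarrow[\Psi\vdash P]$; ($\rightarrow L$) from $\Delta;\Gamma\xRightarrow{R}\tau_1$ and $\Delta;\Gamma>y'{:}\tau_2\Rightarrow[\Psi\vdash P]$ infer $\Delta;\Gamma>y{:}\tau_1\rightarrow\tau_2\Rightarrow[\Psi\vdash P]$; (blur) from $\Delta;\cdot\gg\Gamma,y'{:}[\Phi\vdash Q]\xRightarrow{L}[\Psi\vdash P]$ infer $\Delta;\Gamma>y'{:}[\Phi\vdash Q]\Rightarrow[\Psi\vdash P]$. *)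

theory Defs
  imports Main
begin

type_synonym name = string

datatype nrm = Neu neu | Lam name nrm
and neu = Var name | Const name | App neu nrm | MVar name sub
and sub = SNil | Wk name | SCons sub nrm

datatype atp = Atom name "nrm list"

datatype tp = At atp | Arr tp tp | Pi name tp tp

text \<open>Context declarations: x:A (proof-relevant), x^:A (parameter).\<close>
datatype decl = Rel name tp | Par name tp

datatype lfctx = LNil | LVar name | LExt lfctx decl

datatype hctx = HNil | HVar name | HExt hctx name

datatype mtp = MBox lfctx atp | Schema name

datatype mtm = MT hctx neu | MCtx lfctx

datatype ctp = Box lfctx atp | CArr ctp ctp | CPi name mtp ctp

type_synonym mctx = "(name \<times> mtp) list"
type_synonym cctx = "(name \<times> ctp) list"
type_synonym sig = "(name \<times> tp) list"

text \<open>The operations the paper takes as given: hereditary substitution [M/x^]B,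
  hereditary application of a simultaneous substitution [sigma]B (for sigma : Phi),
  meta-substitution [[C/X]]tau, and checking of an LF context against a schema.\<close>
record ops =
  hsub :: "nrm \<Rightarrow> name \<Rightarrow> tp \<Rightarrow> tp"
  ssub :: "sub \<Rightarrow> lfctx \<Rightarrow> tp \<Rightarrow> tp"
  msub :: "mtm \<Rightarrow> name \<Rightarrow> ctp \<Rightarrow> ctp"
  schk :: "mctx \<Rightarrow> lfctx \<Rightarrow> name \<Rightarrow> bool"

fun ldecls :: "lfctx \<Rightarrow> decl list" where
  "ldecls LNil = []"
| "ldecls (LVar _) = []"
| "ldecls (LExt \<Psi> d) = ldecls \<Psi> @ [d]"

fun lapp :: "lfctx \<Rightarrow> decl list \<Rightarrow> lfctx" where
  "lapp \<Psi> [] = \<Psi>"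
| "lapp \<Psi> (d # ds) = lapp (LExt \<Psi> d) ds"

fun dname :: "decl \<Rightarrow> name" where
  "dname (Rel x _) = x"
| "dname (Par x _) = x"

fun hat :: "lfctx \<Rightarrow> hctx" where
  "hat LNil = HNil"
| "hat (LVar \<psi>) = HVar \<psi>"
| "hat (LExt \<Psi> d) = HExt (hat \<Psi>) (dname d)"

fun is_box :: "ctp \<Rightarrow> bool" where
  "is_box (Box _ _) = True"
| "is_box _ = False"

inductive lfchk :: "sig \<Rightarrow> ops \<Rightarrow> mctx \<Rightarrow> lfctx \<Rightarrow> nrm \<Rightarrow> tp \<Rightarrow> bool"
  and lfsyn :: "sig \<Rightarrow> ops \<Rightarrow> mctx \<Rightarrow> lfctx \<Rightarrow> neu \<Rightarrow> tp \<Rightarrow> bool"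
  and lfchks :: "sig \<Rightarrow> ops \<Rightarrow> mctx \<Rightarrow> lfctx \<Rightarrow> sub \<Rightarrow> lfctx \<Rightarrow> bool"
  for Sg :: sig and Ops :: ops where
  chk_neu: "lfsyn Sg Ops \<Delta> \<Psi> R (At P) \<Longrightarrow> lfchk Sg Ops \<Delta> \<Psi> (Neu R) (At P)"
| chk_lam_arr: "lfchk Sg Ops \<Delta> (LExt \<Psi> (Rel x A)) M B \<Longrightarrow> lfchk Sg Ops \<Delta> \<Psi> (Lam x M) (Arr A B)"
| chk_lam_pi: "lfchk Sg Ops \<Delta> (LExt \<Psi> (Par x A)) M B \<Longrightarrow> lfchk Sg Ops \<Delta> \<Psi> (Lam x M) (Pi x A B)"
| syn_rel: "Rel x A \<in> set (ldecls \<Psi>) \<Longrightarrow> lfsyn Sg Ops \<Delta> \<Psi> (Var x) A"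
| syn_par: "Par x A \<in> set (ldecls \<Psi>) \<Longrightarrow> lfsyn Sg Ops \<Delta> \<Psi> (Var x) A"
| syn_const: "(c, A) \<in> set Sg \<Longrightarrow> lfsyn Sg Ops \<Delta> \<Psi> (Const c) A"
| syn_app_arr: "lfsyn Sg Ops \<Delta> \<Psi> R (Arr A B) \<Longrightarrow> lfchk Sg Ops \<Delta> \<Psi> N A
      \<Longrightarrow> lfsyn Sg Ops \<Delta> \<Psi> (App R N) B"
| syn_app_pi: "lfsyn Sg Ops \<Delta> \<Psi> R (Pi x A B) \<Longrightarrow> lfchk Sg Ops \<Delta> \<Psi> N A
      \<Longrightarrow> lfsyn Sg Ops \<Delta> \<Psi> (App R N) (hsub Ops N x B)"
| syn_mvar: "(u, MBox \<Phi> P) \<in> set \<Delta> \<Longrightarrow> lfchks Sg Ops \<Delta> \<Psi> \<sigma> \<Phi>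
      \<Longrightarrow> lfsyn Sg Ops \<Delta> \<Psi> (MVar u \<sigma>) (ssub Ops \<sigma> \<Phi> (At P))"
| chks_nil: "lfchks Sg Ops \<Delta> \<Psi> SNil LNil"
| chks_wk: "lfchks Sg Ops \<Delta> (lapp (LVar \<psi>) ds) (Wk \<psi>) (LVar \<psi>)"
| chks_rel: "lfchks Sg Ops \<Delta> \<Psi> \<sigma> \<Phi> \<Longrightarrow> lfchk Sg Ops \<Delta> \<Psi> M (ssub Ops \<sigma> \<Phi> B)
      \<Longrightarrow> lfchks Sg Ops \<Delta> \<Psi> (SCons \<sigma> M) (LExt \<Phi> (Rel x B))"
| chks_par: "lfchks Sg Ops \<Delta> \<Psi> \<sigma> \<Phi> \<Longrightarrow> lfchk Sg Ops \<Delta> \<Psi> M (ssub Ops \<sigma> \<Phi> B)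
      \<Longrightarrow> lfchks Sg Ops \<Delta> \<Psi> (SCons \<sigma> M) (LExt \<Phi> (Par x B))"

inductive mchk :: "sig \<Rightarrow> ops \<Rightarrow> mctx \<Rightarrow> mtm \<Rightarrow> mtp \<Rightarrow> bool" for Sg :: sig and Ops :: ops where
  mchk_box: "lfchk Sg Ops \<Delta> \<Psi> (Neu R) (At P) \<Longrightarrow> mchk Sg Ops \<Delta> (MT (hat \<Psi>) R) (MBox \<Psi> P)"
| mchk_ctx: "schk Ops \<Delta> \<Psi> G \<Longrightarrow> mchk Sg Ops \<Delta> (MCtx \<Psi>) (Schema G)"

inductive seq :: "sig \<Rightarrow> ops \<Rightarrow> mctx \<Rightarrow> lfctx \<Rightarrow> tp \<Rightarrow> bool"
  and seqs :: "sig \<Rightarrow> ops \<Rightarrow> mctx \<Rightarrow> lfctx \<Rightarrow> sub \<Rightarrow> lfctx \<Rightarrow> bool"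
  for Sg :: sig and Ops :: ops where
  init_sig: "(c, A) \<in> set Sg \<Longrightarrow> seq Sg Ops \<Delta> \<Psi> A"
| init_psi: "Rel x A \<in> set (ldecls \<Psi>) \<Longrightarrow> seq Sg Ops \<Delta> \<Psi> A"
| piR: "seq Sg Ops \<Delta> (LExt \<Psi> (Par x A)) B \<Longrightarrow> seq Sg Ops \<Delta> \<Psi> (Pi x A B)"
| piL: "Rel x1 (Pi x A B) \<in> set (ldecls \<Psi>) \<Longrightarrow> lfchk Sg Ops \<Delta> \<Psi> M A
      \<Longrightarrow> seq Sg Ops \<Delta> (LExt \<Psi> (Rel x2 (hsub Ops M x B))) A' \<Longrightarrow> seq Sg Ops \<Delta> \<Psi> A'"
| arrR: "seq Sg Ops \<Delta> (LExt \<Psi> (Rel x A)) B \<Longrightarrow> seq Sg Ops \<Delta> \<Psi> (Arr A B)"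
| arrL: "Rel x1 (Arr A B) \<in> set (ldecls \<Psi>) \<Longrightarrow> seq Sg Ops \<Delta> \<Psi> A
      \<Longrightarrow> seq Sg Ops \<Delta> (LExt \<Psi> (Rel x2 B)) A' \<Longrightarrow> seq Sg Ops \<Delta> \<Psi> A'"
| reflect: "(u, MBox \<Phi> P) \<in> set \<Delta> \<Longrightarrow> seqs Sg Ops \<Delta> \<Psi> \<sigma> \<Phi>
      \<Longrightarrow> seq Sg Ops \<Delta> (LExt \<Psi> (Rel x (ssub Ops \<sigma> \<Phi> (At P)))) A \<Longrightarrow> seq Sg Ops \<Delta> \<Psi> A"
| seqs_nil: "seqs Sg Ops \<Delta> \<Psi> SNil LNil"
| seqs_wk: "seqs Sg Ops \<Delta> (lapp (LVar \<psi>) ds) (Wk \<psi>) (LVar \<psi>)"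
| seqs_rel: "seqs Sg Ops \<Delta> \<Psi> \<sigma> \<Phi> \<Longrightarrow> seq Sg Ops \<Delta> \<Psi> (ssub Ops \<sigma> \<Phi> B)
      \<Longrightarrow> seqs Sg Ops \<Delta> \<Psi> (SCons \<sigma> N) (LExt \<Phi> (Rel x B))"
| seqs_par: "seqs Sg Ops \<Delta> \<Psi> \<sigma> \<Phi> \<Longrightarrow> lfchk Sg Ops \<Delta> \<Psi> M (ssub Ops \<sigma> \<Phi> B)
      \<Longrightarrow> seqs Sg Ops \<Delta> \<Psi> (SCons \<sigma> M) (LExt \<Phi> (Par x B))"

inductive cseq :: "sig \<Rightarrow> ops \<Rightarrow> mctx \<Rightarrow> cctx \<Rightarrow> ctp \<Rightarrow> bool"
  for Sg :: sig and Ops :: ops where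
  cpiR: "cseq Sg Ops (\<Delta> @ [(X, U)]) \<Gamma> \<tau> \<Longrightarrow> cseq Sg Ops \<Delta> \<Gamma> (CPi X U \<tau>)"
| cpiL: "(y1, CPi X U \<tau>') \<in> set \<Gamma> \<Longrightarrow> mchk Sg Ops \<Delta> C U
      \<Longrightarrow> cseq Sg Ops \<Delta> (\<Gamma> @ [(y2, msub Ops C X \<tau>')]) \<tau> \<Longrightarrow> cseq Sg Ops \<Delta> \<Gamma> \<tau>"
| carrL: "(y1, CArr \<tau>1 \<tau>2) \<in> set \<Gamma> \<Longrightarrow> cseq Sg Ops \<Delta> \<Gamma> \<tau>1
      \<Longrightarrow> cseq Sg Ops \<Delta> (\<Gamma> @ [(y2, \<tau>2)]) \<tau> \<Longrightarrow> cseq Sg Ops \<Delta> \<Gamma> \<tau>"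
| carrR: "cseq Sg Ops \<Delta> (\<Gamma> @ [(y, \<tau>1)]) \<tau>2 \<Longrightarrow> cseq Sg Ops \<Delta> \<Gamma> (CArr \<tau>1 \<tau>2)"
| cinit: "(y, \<tau>) \<in> set \<Gamma> \<Longrightarrow> cseq Sg Ops \<Delta> \<Gamma> \<tau>"
| boxR: "seq Sg Ops \<Delta> \<Psi> (At P) \<Longrightarrow> cseq Sg Ops \<Delta> \<Gamma> (Box \<Psi> P)"
| boxL: "(y, Box \<Psi> P) \<in> set \<Gamma> \<Longrightarrow> cseq Sg Ops (\<Delta> @ [(X, MBox \<Psi> P)]) \<Gamma> \<tau>
      \<Longrightarrow> cseq Sg Ops \<Delta> \<Gamma> \<tau>"

inductive uni :: "sig \<Rightarrow> ops \<Rightarrow> mctx \<Rightarrow> lfctx \<Rightarrow> tp \<Rightarrow> bool"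
  and unis :: "sig \<Rightarrow> ops \<Rightarrow> mctx \<Rightarrow> lfctx \<Rightarrow> sub \<Rightarrow> lfctx \<Rightarrow> bool"
  and foc :: "sig \<Rightarrow> ops \<Rightarrow> mctx \<Rightarrow> lfctx \<Rightarrow> name \<Rightarrow> tp \<Rightarrow> atp \<Rightarrow> bool"
  for Sg :: sig and Ops :: ops where
  u_piR: "uni Sg Ops \<Delta> (LExt \<Psi> (Par x A)) B \<Longrightarrow> uni Sg Ops \<Delta> \<Psi> (Pi x A B)"
| u_arrR: "uni Sg Ops \<Delta> (LExt \<Psi> (Rel x A)) B \<Longrightarrow> uni Sg Ops \<Delta> \<Psi> (Arr A B)"
| u_transD: "(X, MBox \<Phi> Q) \<in> set \<Delta> \<Longrightarrow> unis Sg Ops \<Delta> \<Psi> \<sigma> \<Phi>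
      \<Longrightarrow> ssub Ops \<sigma> \<Phi> (At Q) = At P \<Longrightarrow> uni Sg Ops \<Delta> \<Psi> (At P)"
| u_transP: "Rel x A \<in> set (ldecls \<Psi>) \<Longrightarrow> foc Sg Ops \<Delta> \<Psi> x A P \<Longrightarrow> uni Sg Ops \<Delta> \<Psi> (At P)"
| us_nil: "unis Sg Ops \<Delta> \<Psi> SNil LNil"
| us_wk: "unis Sg Ops \<Delta> (lapp (LVar \<psi>) ds) (Wk \<psi>) (LVar \<psi>)"
| us_rel: "unis Sg Ops \<Delta> \<Psi> \<sigma> \<Phi> \<Longrightarrow> uni Sg Ops \<Delta> \<Psi> (ssub Ops \<sigma> \<Phi> B)
      \<Longrightarrow> unis Sg Ops \<Delta> \<Psi> (SCons \<sigma> N) (LExt \<Phi> (Rel x B))"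
| us_par: "unis Sg Ops \<Delta> \<Psi> \<sigma> \<Phi> \<Longrightarrow> lfchk Sg Ops \<Delta> \<Psi> M (ssub Ops \<sigma> \<Phi> B)
      \<Longrightarrow> unis Sg Ops \<Delta> \<Psi> (SCons \<sigma> M) (LExt \<Phi> (Par x B))"
| f_init: "foc Sg Ops \<Delta> \<Psi> x (At P) P"
| f_arrL: "uni Sg Ops \<Delta> \<Psi> A \<Longrightarrow> foc Sg Ops \<Delta> \<Psi> x' B P \<Longrightarrow> foc Sg Ops \<Delta> \<Psi> x (Arr A B) P"
| f_piL: "lfchk Sg Ops \<Delta> \<Psi> M A \<Longrightarrow> foc Sg Ops \<Delta> \<Psi> x' (hsub Ops M y B) P
      \<Longrightarrow> foc Sg Ops \<Delta> \<Psi> x (Pi y A B) P"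

definition mfoc :: "sig \<Rightarrow> ops \<Rightarrow> mctx \<Rightarrow> name \<Rightarrow> mtp \<Rightarrow> lfctx \<Rightarrow> atp \<Rightarrow> bool" where
  "mfoc Sg Ops \<Delta> X U \<Psi> P \<longleftrightarrow>
     (\<exists>\<Phi> Q \<sigma>. U = MBox \<Phi> Q \<and> unis Sg Ops (\<Delta> @ [(X, U)]) \<Psi> \<sigma> \<Phi> \<and> ssub Ops \<sigma> \<Phi> (At Q) = At P)"

inductive ur :: "sig \<Rightarrow> ops \<Rightarrow> mctx \<Rightarrow> cctx \<Rightarrow> ctp \<Rightarrow> bool"
  and ul :: "sig \<Rightarrow> ops \<Rightarrow> mctx \<Rightarrow> cctx \<Rightarrow> cctx \<Rightarrow> lfctx \<Rightarrow> atp \<Rightarrow> bool"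
  and cf :: "sig \<Rightarrow> ops \<Rightarrow> mctx \<Rightarrow> cctx \<Rightarrow> name \<Rightarrow> ctp \<Rightarrow> lfctx \<Rightarrow> atp \<Rightarrow> bool"
  for Sg :: sig and Ops :: ops where
  ur_arrR: "ur Sg Ops \<Delta> (\<Gamma> @ [(y, \<tau>1)]) \<tau>2 \<Longrightarrow> ur Sg Ops \<Delta> \<Gamma> (CArr \<tau>1 \<tau>2)"
| ur_piR: "ur Sg Ops (\<Delta> @ [(X, U)]) \<Gamma> \<tau> \<Longrightarrow> ur Sg Ops \<Delta> \<Gamma> (CPi X U \<tau>)"
| ur_lr: "ul Sg Ops \<Delta> [] \<Gamma> \<Psi> P \<Longrightarrow> ur Sg Ops \<Delta> \<Gamma> (Box \<Psi> P)"
| ul_boxL: "ul Sg Ops (\<Delta> @ [(X, MBox \<Phi> Q)]) \<Gamma> \<Gamma>' \<Psi> P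
      \<Longrightarrow> ul Sg Ops \<Delta> \<Gamma> (\<Gamma>' @ [(y, Box \<Phi> Q)]) \<Psi> P"
| ul_shift: "\<not> is_box \<tau> \<Longrightarrow> ul Sg Ops \<Delta> (\<Gamma> @ [(y, \<tau>)]) \<Gamma>' \<Psi> P
      \<Longrightarrow> ul Sg Ops \<Delta> \<Gamma> (\<Gamma>' @ [(y, \<tau>)]) \<Psi> P"
| ul_level: "uni Sg Ops \<Delta> \<Psi> (At P) \<Longrightarrow> ul Sg Ops \<Delta> \<Gamma> [] \<Psi> P"
| ul_focus: "(y, \<tau>) \<in> set \<Gamma> \<Longrightarrow> cf Sg Ops \<Delta> \<Gamma> y \<tau> \<Psi> P \<Longrightarrow> ul Sg Ops \<Delta> \<Gamma> [] \<Psi> P"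
| cf_piL: "mchk Sg Ops \<Delta> C U \<Longrightarrow> cf Sg Ops \<Delta> \<Gamma> y' (msub Ops C X \<tau>) \<Psi> P
      \<Longrightarrow> cf Sg Ops \<Delta> \<Gamma> y (CPi X U \<tau>) \<Psi> P"
| cf_arrL: "ur Sg Ops \<Delta> \<Gamma> \<tau>1 \<Longrightarrow> cf Sg Ops \<Delta> \<Gamma> y' \<tau>2 \<Psi> P
      \<Longrightarrow> cf Sg Ops \<Delta> \<Gamma> y (CArr \<tau>1 \<tau>2) \<Psi> P"
| cf_blur: "ul Sg Ops \<Delta> [] (\<Gamma> @ [(y', Box \<Phi> Q)]) \<Psi> P
      \<Longrightarrow> cf Sg Ops \<Delta> \<Gamma> y' (Box \<Phi> Q) \<Psi> P"

end

theory Submission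
  imports Defs
begin

text \<open>Every rule of the focusing calculi is an instance of a rule of the sequent calculi, up to the
  shape of the contexts: focusing on x:A yields a derivation in \<open>\<Psi>, x:A\<close> although x:A already
  occurs in \<open>\<Psi>\<close>, the premises of the focused left rules live in \<open>\<Psi>\<close> rather than in \<open>\<Psi>, x:A\<close>, and
  the uniform left phase reorders the computation context. All of this is absorbed by weakening
  along the order "same context variable, at least the same declarations", under which both
  sequent calculi are closed because, apart from the root, they only inspect context membership.\<close>

fun ctx_root :: "lfctx \<Rightarrow> lfctx" where
  "ctx_root LNil = LNil"
| "ctx_root (LVar \<psi>) = LVar \<psi>"
| "ctx_root (LExt \<Psi> d) = ctx_root \<Psi>"

text \<open>The roots must agree because the rule for \<open>wk\<^sub>\<psi>\<close> only applies in contexts \<open>\<psi>, \<Psi>\<close>.\<close>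

definition subctx :: "lfctx \<Rightarrow> lfctx \<Rightarrow> bool" where
  "subctx \<Psi> \<Psi>' \<longleftrightarrow> ctx_root \<Psi> = ctx_root \<Psi>' \<and> set (ldecls \<Psi>) \<subseteq> set (ldecls \<Psi>')"

lemma subctx_LExt: "subctx \<Psi> \<Psi>' \<Longrightarrow> subctx (LExt \<Psi> d) (LExt \<Psi>' d)"
  by (auto simp: subctx_def)

lemma subctx_LExt_right: "subctx \<Psi> (LExt \<Psi> d)"
  by (auto simp: subctx_def)

lemma subctx_LExt_middle: "subctx (LExt \<Psi> d) (LExt (LExt \<Psi> e) d)"
  by (auto simp: subctx_def)

lemma subctx_LExt_contract: "d \<in> set (ldecls \<Psi>) \<Longrightarrow> subctx (LExt \<Psi> d) \<Psi>"
  by (auto simp: subctx_def)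

lemma ctx_root_lapp: "ctx_root (lapp \<Psi> ds) = ctx_root \<Psi>"
  by (induction ds arbitrary: \<Psi>) auto

lemma lapp_snoc: "lapp \<Psi> (ds @ [d]) = LExt (lapp \<Psi> ds) d"
  by (induction ds arbitrary: \<Psi>) auto

lemma ctx_root_LVar_imp_lapp: "ctx_root \<Psi> = LVar \<psi> \<Longrightarrow> \<exists>ds. \<Psi> = lapp (LVar \<psi>) ds"
proof (induction \<Psi>)
  case (LExt \<Psi> d)
  then obtain ds where "\<Psi> = lapp (LVar \<psi>) ds" by auto
  then show ?case by (metis lapp_snoc)
qed (auto intro: exI[of _ "[]"])

lemma subctx_lapp_LVar: "subctx (lapp (LVar \<psi>) ds) \<Psi>' \<Longrightarrow> \<exists>ds'. \<Psi>' = lapp (LVar \<psi>) ds'"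
  unfolding subctx_def by (metis ctx_root_lapp ctx_root.simps(2) ctx_root_LVar_imp_lapp)

lemma lf_weakening:
  "lfchk Sg Ops \<Delta> \<Psi> M A \<Longrightarrow> subctx \<Psi> \<Psi>' \<Longrightarrow> lfchk Sg Ops \<Delta> \<Psi>' M A"
  "lfsyn Sg Ops \<Delta> \<Psi> R A \<Longrightarrow> subctx \<Psi> \<Psi>' \<Longrightarrow> lfsyn Sg Ops \<Delta> \<Psi>' R A"
  "lfchks Sg Ops \<Delta> \<Psi> \<sigma> \<Phi> \<Longrightarrow> subctx \<Psi> \<Psi>' \<Longrightarrow> lfchks Sg Ops \<Delta> \<Psi>' \<sigma> \<Phi>"
proof (induction arbitrary: \<Psi>' and \<Psi>' and \<Psi>' rule: lfchk_lfsyn_lfchks.inducts)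
  case (chk_lam_arr \<Delta> \<Psi> x A M B)
  then show ?case by (blast intro: lfchk_lfsyn_lfchks.chk_lam_arr subctx_LExt)
next
  case (chk_lam_pi \<Delta> \<Psi> x A M B)
  then show ?case by (blast intro: lfchk_lfsyn_lfchks.chk_lam_pi subctx_LExt)
next
  case (chks_wk \<Delta> \<psi> ds)
  then show ?case by (metis subctx_lapp_LVar lfchk_lfsyn_lfchks.chks_wk)
qed (auto simp: subctx_def intro: lfchk_lfsyn_lfchks.intros)

lemma seq_weakening:
  "seq Sg Ops \<Delta> \<Psi> A \<Longrightarrow> subctx \<Psi> \<Psi>' \<Longrightarrow> seq Sg Ops \<Delta> \<Psi>' A"
  "seqs Sg Ops \<Delta> \<Psi> \<sigma> \<Phi> \<Longrightarrow> subctx \<Psi> \<Psi>' \<Longrightarrow> seqs Sg Ops \<Delta> \<Psi>' \<sigma> \<Phi>"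
proof (induction arbitrary: \<Psi>' and \<Psi>' rule: seq_seqs.inducts)
  case (init_psi x A \<Psi> \<Delta>)
  then have "Rel x A \<in> set (ldecls \<Psi>')"
    by (auto simp: subctx_def)
  then show ?case by (rule seq_seqs.init_psi)
next
  case (piL x1 x A B \<Psi> \<Delta> M x2 A')
  have "Rel x1 (Pi x A B) \<in> set (ldecls \<Psi>')"
    using piL by (auto simp: subctx_def)
  moreover have "lfchk Sg Ops \<Delta> \<Psi>' M A"
    using \<open>lfchk Sg Ops \<Delta> \<Psi> M A\<close> piL.prems by (rule lf_weakening)
  moreover have "seq Sg Ops \<Delta> (LExt \<Psi>' (Rel x2 (hsub Ops M x B))) A'"
    using piL by (blast intro: subctx_LExt)
  ultimately show ?case by (rule seq_seqs.piL)
next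
  case (arrL x1 A B \<Psi> \<Delta> x2 A')
  have "Rel x1 (Arr A B) \<in> set (ldecls \<Psi>')"
    using arrL by (auto simp: subctx_def)
  moreover have "seq Sg Ops \<Delta> \<Psi>' A"
    using arrL by blast
  moreover have "seq Sg Ops \<Delta> (LExt \<Psi>' (Rel x2 B)) A'"
    using arrL by (blast intro: subctx_LExt)
  ultimately show ?case by (rule seq_seqs.arrL)
next
  case (seqs_wk \<Delta> \<psi> ds)
  then show ?case by (metis subctx_lapp_LVar seq_seqs.seqs_wk)
next
  case (seqs_par \<Delta> \<Psi> \<sigma> \<Phi> M B x)
  have "seqs Sg Ops \<Delta> \<Psi>' \<sigma> \<Phi>"
    using seqs_par by blast
  moreover have "lfchk Sg Ops \<Delta> \<Psi>' M (ssub Ops \<sigma> \<Phi> B)"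
    using \<open>lfchk Sg Ops \<Delta> \<Psi> M (ssub Ops \<sigma> \<Phi> B)\<close> seqs_par.prems by (rule lf_weakening)
  ultimately show ?case by (rule seq_seqs.seqs_par)
next
  case (reflect u \<Phi> P \<Delta> \<Psi> \<sigma> x A)
  have "seqs Sg Ops \<Delta> \<Psi>' \<sigma> \<Phi>"
    using reflect by blast
  moreover have "seq Sg Ops \<Delta> (LExt \<Psi>' (Rel x (ssub Ops \<sigma> \<Phi> (At P)))) A"
    using reflect by (blast intro: subctx_LExt)
  ultimately show ?case by (rule seq_seqs.reflect[OF \<open>(u, MBox \<Phi> P) \<in> set \<Delta>\<close>])
qed (blast intro: seq_seqs.init_sig seq_seqs.piR seq_seqs.arrR seq_seqs.seqs_nil
    seq_seqs.seqs_rel subctx_LExt)+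

lemma seq_reflect_init:
  assumes "(u, MBox \<Phi> Q) \<in> set \<Delta>" and "seqs Sg Ops \<Delta> \<Psi> \<sigma> \<Phi>"
    and "ssub Ops \<sigma> \<Phi> (At Q) = At P"
  shows "seq Sg Ops \<Delta> \<Psi> (At P)"
proof (rule seq_seqs.reflect[OF assms(1,2)])
  show "seq Sg Ops \<Delta> (LExt \<Psi> (Rel u (ssub Ops \<sigma> \<Phi> (At Q)))) (At P)"
    unfolding assms(3) by (rule seq_seqs.init_psi[where x = u]) simp
qed

lemma lf_focusing_sound:
  "uni Sg Ops \<Delta> \<Psi> A \<Longrightarrow> seq Sg Ops \<Delta> \<Psi> A"
  "unis Sg Ops \<Delta> \<Psi> \<sigma> \<Phi> \<Longrightarrow> seqs Sg Ops \<Delta> \<Psi> \<sigma> \<Phi>"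
  "foc Sg Ops \<Delta> \<Psi> x A P \<Longrightarrow> seq Sg Ops \<Delta> (LExt \<Psi> (Rel x A)) (At P)"
proof (induction rule: uni_unis_foc.inducts)
  case (u_transD X \<Phi> Q \<Delta> \<Psi> \<sigma> P)
  then show ?case by (blast intro: seq_reflect_init)
next
  case (u_transP x A \<Psi> \<Delta> P)
  from \<open>seq Sg Ops \<Delta> (LExt \<Psi> (Rel x A)) (At P)\<close>
  show ?case by (rule seq_weakening) (rule subctx_LExt_contract[OF u_transP.hyps])
next
  case (f_init \<Delta> \<Psi> x P)
  show ?case by (rule seq_seqs.init_psi[where x = x]) simp
next
  case (f_arrL \<Delta> \<Psi> A x' B P x)
  have "seq Sg Ops \<Delta> (LExt \<Psi> (Rel x (Arr A B))) A"
    using \<open>seq Sg Ops \<Delta> \<Psi> A\<close> subctx_LExt_right by (rule seq_weakening)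
  moreover have "seq Sg Ops \<Delta> (LExt (LExt \<Psi> (Rel x (Arr A B))) (Rel x' B)) (At P)"
    using \<open>seq Sg Ops \<Delta> (LExt \<Psi> (Rel x' B)) (At P)\<close> subctx_LExt_middle
    by (rule seq_weakening)
  ultimately show ?case by (rule seq_seqs.arrL[of x, rotated]) simp
next
  case (f_piL \<Delta> \<Psi> M A x' y B P x)
  have "lfchk Sg Ops \<Delta> (LExt \<Psi> (Rel x (Pi y A B))) M A"
    using \<open>lfchk Sg Ops \<Delta> \<Psi> M A\<close> subctx_LExt_right by (rule lf_weakening)
  moreover have
    "seq Sg Ops \<Delta> (LExt (LExt \<Psi> (Rel x (Pi y A B))) (Rel x' (hsub Ops M y B))) (At P)"
    using \<open>seq Sg Ops \<Delta> (LExt \<Psi> (Rel x' (hsub Ops M y B))) (At P)\<close> subctx_LExt_middle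
    by (rule seq_weakening)
  ultimately show ?case by (rule seq_seqs.piL[of x, rotated]) simp
qed (blast intro: seq_seqs.piR seq_seqs.arrR seq_seqs.seqs_nil seq_seqs.seqs_wk
    seq_seqs.seqs_rel seq_seqs.seqs_par)+

lemma mfoc_sound: "mfoc Sg Ops \<Delta> X U \<Psi> P \<Longrightarrow> seq Sg Ops (\<Delta> @ [(X, U)]) \<Psi> (At P)"
  unfolding mfoc_def
proof (elim exE conjE)
  fix \<Phi> Q \<sigma>
  assume "U = MBox \<Phi> Q" and "unis Sg Ops (\<Delta> @ [(X, U)]) \<Psi> \<sigma> \<Phi>"
    and "ssub Ops \<sigma> \<Phi> (At Q) = At P"
  moreover have "(X, MBox \<Phi> Q) \<in> set (\<Delta> @ [(X, U)])"
    using \<open>U = MBox \<Phi> Q\<close> by simp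
  ultimately show ?thesis by (blast intro: seq_reflect_init lf_focusing_sound(2))
qed

lemma cseq_weakening: "cseq Sg Ops \<Delta> \<Gamma> \<tau> \<Longrightarrow> set \<Gamma> \<subseteq> set \<Gamma>' \<Longrightarrow> cseq Sg Ops \<Delta> \<Gamma>' \<tau>"
proof (induction arbitrary: \<Gamma>' rule: cseq.induct)
  case (cpiL y1 X U \<tau>' \<Gamma> \<Delta> C y2 \<tau>)
  have "(y1, CPi X U \<tau>') \<in> set \<Gamma>'"
    using cpiL by auto
  moreover note \<open>mchk Sg Ops \<Delta> C U\<close>
  moreover have "cseq Sg Ops \<Delta> (\<Gamma>' @ [(y2, msub Ops C X \<tau>')]) \<tau>"
    using cpiL.prems by (intro cpiL.IH) auto
  ultimately show ?case by (rule cseq.cpiL)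
next
  case (carrL y1 \<tau>1 \<tau>2 \<Gamma> \<Delta> y2 \<tau>)
  have "(y1, CArr \<tau>1 \<tau>2) \<in> set \<Gamma>'"
    using carrL by auto
  moreover have "cseq Sg Ops \<Delta> \<Gamma>' \<tau>1"
    using carrL.prems by (intro carrL.IH)
  moreover have "cseq Sg Ops \<Delta> (\<Gamma>' @ [(y2, \<tau>2)]) \<tau>"
    using carrL.prems by (intro carrL.IH) auto
  ultimately show ?case by (rule cseq.carrL)
next
  case (carrR \<Delta> \<Gamma> y \<tau>1 \<tau>2)
  have "cseq Sg Ops \<Delta> (\<Gamma>' @ [(y, \<tau>1)]) \<tau>2"
    using carrR.prems by (intro carrR.IH) auto
  then show ?case by (rule cseq.carrR)
next
  case (cinit y \<tau> \<Gamma> \<Delta>)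
  then have "(y, \<tau>) \<in> set \<Gamma>'" by auto
  then show ?case by (rule cseq.cinit)
next
  case (boxL y \<Psi> P \<Gamma> \<Delta> X \<tau>)
  have "(y, Box \<Psi> P) \<in> set \<Gamma>'"
    using boxL by auto
  moreover have "cseq Sg Ops (\<Delta> @ [(X, MBox \<Psi> P)]) \<Gamma>' \<tau>"
    using boxL.prems by (intro boxL.IH)
  ultimately show ?case by (rule cseq.boxL)
qed (blast intro: cseq.cpiR cseq.boxR)+

lemma comp_focusing_sound:
  "ur Sg Ops \<Delta> \<Gamma> \<tau> \<Longrightarrow> cseq Sg Ops \<Delta> \<Gamma> \<tau>"
  "ul Sg Ops \<Delta> \<Gamma> \<Gamma>' \<Psi> P \<Longrightarrow> cseq Sg Ops \<Delta> (\<Gamma> @ \<Gamma>') (Box \<Psi> P)"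
  "cf Sg Ops \<Delta> \<Gamma> y \<tau> \<Psi> P \<Longrightarrow> cseq Sg Ops \<Delta> (\<Gamma> @ [(y, \<tau>)]) (Box \<Psi> P)"
proof (induction rule: ur_ul_cf.inducts)
  case (ul_boxL \<Delta> X \<Phi> Q \<Gamma> \<Gamma>' \<Psi> P y)
  have "cseq Sg Ops (\<Delta> @ [(X, MBox \<Phi> Q)]) (\<Gamma> @ \<Gamma>' @ [(y, Box \<Phi> Q)]) (Box \<Psi> P)"
    using \<open>cseq Sg Ops (\<Delta> @ [(X, MBox \<Phi> Q)]) (\<Gamma> @ \<Gamma>') (Box \<Psi> P)\<close>
    by (rule cseq_weakening) auto
  then show ?case by (rule cseq.boxL[where y = y, rotated]) simp
next
  case (ul_shift \<tau> \<Delta> \<Gamma> y \<Gamma>' \<Psi> P)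
  from \<open>cseq Sg Ops \<Delta> ((\<Gamma> @ [(y, \<tau>)]) @ \<Gamma>') (Box \<Psi> P)\<close>
  show ?case by (rule cseq_weakening) auto
next
  case (ul_level \<Delta> \<Psi> P \<Gamma>)
  then show ?case by (blast intro: cseq.boxR lf_focusing_sound(1))
next
  case (ul_focus y \<tau> \<Gamma> \<Delta> \<Psi> P)
  from \<open>cseq Sg Ops \<Delta> (\<Gamma> @ [(y, \<tau>)]) (Box \<Psi> P)\<close>
  show ?case by (rule cseq_weakening) (use \<open>(y, \<tau>) \<in> set \<Gamma>\<close> in auto)
next
  case (cf_piL \<Delta> C U \<Gamma> y' X \<tau> \<Psi> P y)
  have "(y, CPi X U \<tau>) \<in> set (\<Gamma> @ [(y, CPi X U \<tau>)])"
    by simp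
  moreover note \<open>mchk Sg Ops \<Delta> C U\<close>
  moreover have "cseq Sg Ops \<Delta> ((\<Gamma> @ [(y, CPi X U \<tau>)]) @ [(y', msub Ops C X \<tau>)]) (Box \<Psi> P)"
    using \<open>cseq Sg Ops \<Delta> (\<Gamma> @ [(y', msub Ops C X \<tau>)]) (Box \<Psi> P)\<close>
    by (rule cseq_weakening) auto
  ultimately show ?case by (rule cseq.cpiL)
next
  case (cf_arrL \<Delta> \<Gamma> \<tau>1 y' \<tau>2 \<Psi> P y)
  have "(y, CArr \<tau>1 \<tau>2) \<in> set (\<Gamma> @ [(y, CArr \<tau>1 \<tau>2)])"
    by simp
  moreover have "cseq Sg Ops \<Delta> (\<Gamma> @ [(y, CArr \<tau>1 \<tau>2)]) \<tau>1"
    using \<open>cseq Sg Ops \<Delta> \<Gamma> \<tau>1\<close> by (rule cseq_weakening) auto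
  moreover have "cseq Sg Ops \<Delta> ((\<Gamma> @ [(y, CArr \<tau>1 \<tau>2)]) @ [(y', \<tau>2)]) (Box \<Psi> P)"
    using \<open>cseq Sg Ops \<Delta> (\<Gamma> @ [(y', \<tau>2)]) (Box \<Psi> P)\<close>
    by (rule cseq_weakening) auto
  ultimately show ?case by (rule cseq.carrL)
qed (auto intro: cseq.carrR cseq.cpiR)

theorem mainTheorem2:
  fixes Sg :: sig and Ops :: ops and \<Delta> :: mctx and \<Psi> \<Phi> :: lfctx and \<Gamma> \<Gamma>' :: cctx
    and A :: tp and \<sigma> :: sub and x X y :: name and P :: atp and U :: mtp and \<tau> :: ctp
  shows "(uni Sg Ops \<Delta> \<Psi> A \<longrightarrow> seq Sg Ops \<Delta> \<Psi> A)
    \<and> (unis Sg Ops \<Delta> \<Psi> \<sigma> \<Phi> \<longrightarrow> seqs Sg Ops \<Delta> \<Psi> \<sigma> \<Phi>)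
    \<and> (foc Sg Ops \<Delta> \<Psi> x A P \<longrightarrow> seq Sg Ops \<Delta> (LExt \<Psi> (Rel x A)) (At P))
    \<and> (mfoc Sg Ops \<Delta> X U \<Psi> P \<longrightarrow> seq Sg Ops (\<Delta> @ [(X, U)]) \<Psi> (At P))
    \<and> (ur Sg Ops \<Delta> \<Gamma> \<tau> \<longrightarrow> cseq Sg Ops \<Delta> \<Gamma> \<tau>)
    \<and> (ul Sg Ops \<Delta> \<Gamma> \<Gamma>' \<Psi> P \<longrightarrow> cseq Sg Ops \<Delta> (\<Gamma> @ \<Gamma>') (Box \<Psi> P))
    \<and> (cf Sg Ops \<Delta> \<Gamma> y \<tau> \<Psi> P \<longrightarrow> cseq Sg Ops \<Delta> (\<Gamma> @ [(y, \<tau>)]) (Box \<Psi> P))"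
  by (intro conjI impI; (erule lf_focusing_sound mfoc_sound comp_focusing_sound)?)

end
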